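(* Let $I=[1/2,1)$. For every dyadic rational $y\in I$ (i.e. $y$ has a finite binary expansion), the value $B(y)$ of the binary function defined below lies in $I$. In other words, $B$ maps the dyadic rationals of $I$ into $I$.
   Context: Every dyadic rational $y\in[1/2,1)$ has a unique finite binary expansion $y=(0.1\,a_{2}\cdots a_{\ell})_2$ with last digit $a_\ell=1$; the integer $\ell\ge 1$ is called the (total) length of $y$ (equivalently, $\ell$ is the least integer with $2^{\ell}y\in\mathbb{Z}$, and then $2^\ell y$ is odd). For $n\ge 0$ let $y^*_n=(0.1\{01\}^n)_2$, where $\{01\}^n$ denotes $n$ consecutive repetitions of the block $01$ (so $y^*_0=1/2$, $y^*_1=(0.101)_2=5/8$, etc.), and let $\mathcal{N}=\{y^*_n : n\ge 0\}$ (the "predecessors"). The binary function is defined, for a dyadic rational $y\in[1/2,1)$ of length $\ell$, by $$B(y)=\begin{cases}1/2, & y\in\mathcal{N},\\ (3y+2^{-\ell})/2, & y\in[1/2,2/3]\setminus\mathcal{N},\\ (3y+2^{-\ell})/4, & y\in(2/3,1).\end{cases}$$ *)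

theory Defs
  imports Complex_Main
begin

definition dyadic :: "real \<Rightarrow> bool" where
  "dyadic y \<longleftrightarrow> (\<exists>k::nat. 2 ^ k * y \<in> \<int>)"

definition dlen :: "real \<Rightarrow> nat" where
  "dlen y = (LEAST l::nat. 2 ^ l * y \<in> \<int>)"

text \<open>Predecessors y*_n = (0.1{01}^n)_2 = 1/2 + sum_{k=1..n} 2^-(2k+1).\<close>
definition ystar :: "nat \<Rightarrow> real" where
  "ystar n = 1/2 + (\<Sum>k=1..n. 1 / 2 ^ (2*k+1))"

definition preds :: "real set" where
  "preds = range ystar"

definition binB :: "real \<Rightarrow> real" where
  "binB y = (if y \<in> preds then 1/2
             else if y \<le> 2/3 then (3*y + 1 / 2 ^ dlen y) / 2
             else (3*y + 1 / 2 ^ dlen y) / 4)"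

end

theory Submission
  imports Defs
begin

text \<open>Write \<open>y = m / 2^l\<close> with \<open>l\<close> the length of \<open>y\<close>. Above \<open>2/3\<close> the bound is immediate
  since \<open>1/2^l \<le> 1/2\<close>. On \<open>[1/2, 2/3]\<close> the only danger is \<open>3 y + 1/2^l \<ge> 2\<close>, i.e.
  \<open>3 m + 1 \<ge> 2^(l+1)\<close> with \<open>3 m \<le> 2^(l+1)\<close>. As \<open>3\<close> does not divide a power of \<open>2\<close>, this forces
  \<open>3 m + 1 = 2^(l+1)\<close>, so \<open>l\<close> is odd and \<open>y = (2 - 1/2^l)/3\<close>, which is exactly a predecessor,
  where \<open>B\<close> is \<open>1/2\<close> by definition.\<close>

lemma ystar_eq: "ystar n = (2 - 1 / 2 ^ (2*n+1)) / 3"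
proof (induction n)
  case 0
  then show ?case by (simp add: ystar_def)
next
  case (Suc n)
  have "ystar (Suc n) = ystar n + 1 / 2 ^ (2 * Suc n + 1)"
    by (simp add: ystar_def)
  with Suc show ?case by (simp add: field_simps)
qed

lemma power_two_mod_three: "(2::int) ^ k mod 3 = (if even k then 1 else 2)"
proof (induction k)
  case 0
  then show ?case by simp
next
  case (Suc k)
  have "(2::int) ^ Suc k mod 3 = 2 * (2 ^ k mod 3) mod 3"
    by (simp add: mod_mult_right_eq)
  with Suc show ?case by (auto split: if_splits)
qed

lemma not_three_dvd_power_two: "\<not> (3::int) dvd 2 ^ k"
  using power_two_mod_three[of k] by (auto simp: dvd_eq_mod_eq_0 split: if_splits)

lemma dyadic_dlen_Ints:
  assumes "dyadic y"
  shows "2 ^ dlen y * y \<in> \<int>"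
  using assms unfolding dyadic_def dlen_def by (rule LeastI_ex)

lemma dlen_pos:
  assumes "dyadic y" and "y \<notin> \<int>"
  shows "0 < dlen y"
  using dyadic_dlen_Ints[OF assms(1)] assms(2) by (cases "dlen y") auto

lemma three_mul_add_eq_two_imp_mem_preds:
  assumes "2 ^ l * y \<in> \<int>" and "3 * y + 1 / 2 ^ l = 2"
  shows "y \<in> preds"
proof -
  obtain m :: int where m: "of_int m = 2 ^ l * y"
    using assms(1) by (metis Ints_cases)
  have "real_of_int (3 * m + 1) = real_of_int (2 ^ Suc l)"
    using assms(2) m by (simp add: field_simps)
  then have "(2::int) ^ Suc l mod 3 = (3 * m + 1) mod 3"
    by (simp only: of_int_eq_iff)
  then have "(2::int) ^ Suc l mod 3 = 1"
    by presburger
  then have "even (Suc l)"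
    using power_two_mod_three[of "Suc l"] by (simp split: if_splits)
  then obtain n where "l = 2 * n + 1"
    by (metis evenE even_Suc oddE)
  moreover have "y = (2 - 1 / 2 ^ l) / 3"
    using assms(2) by simp
  ultimately have "y = ystar n"
    by (simp add: ystar_eq)
  then show ?thesis
    by (simp add: preds_def)
qed

lemma three_mul_add_lt_two:
  assumes "2 ^ l * y \<in> \<int>" and "y \<le> 2/3" and "y \<notin> preds"
  shows "3 * y + 1 / 2 ^ l < 2"
proof -
  obtain m :: int where m: "of_int m = 2 ^ l * y"
    using assms(1) by (metis Ints_cases)
  have scaled: "real_of_int (3 * m + j) = 2 ^ l * (3 * y + j / 2 ^ l)" for j :: int
    using m by (simp add: field_simps)
  have "real_of_int (3 * m) \<le> real_of_int (2 ^ Suc l)"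
    using scaled[of 0] assms(2) by simp
  moreover have "3 * m \<noteq> 2 ^ Suc l"
    using not_three_dvd_power_two by (metis dvd_triv_left)
  moreover have "3 * m + 1 \<noteq> 2 ^ Suc l"
  proof
    assume "3 * m + 1 = 2 ^ Suc l"
    then have "3 * y + 1 / 2 ^ l = 2"
      using scaled[of 1] by simp
    then show False
      using three_mul_add_eq_two_imp_mem_preds[OF assms(1)] assms(3) by blast
  qed
  ultimately have "3 * m + 2 \<le> 2 ^ Suc l"
    by linarith
  then have "real_of_int (3 * m + 2) \<le> real_of_int (2 ^ Suc l)"
    by (simp only: of_int_le_iff)
  then have "2 ^ l * (3 * y + 2 / 2 ^ l) \<le> 2 ^ l * 2"
    unfolding scaled by simp
  then have "3 * y + 2 / 2 ^ l \<le> 2"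
    by (simp add: mult_le_cancel_left_pos)
  moreover have "0 < 1 / (2::real) ^ l"
    by simp
  ultimately show ?thesis
    by linarith
qed

theorem mainTheorem1:
  fixes y :: real
  assumes "dyadic y" and "1/2 \<le> y" and "y < 1"
  shows "1/2 \<le> binB y \<and> binB y < 1"
proof -
  define t :: real where "t = 1 / 2 ^ dlen y"
  have "y \<notin> \<int>"
    using assms(2,3) by (auto elim!: Ints_cases)
  then have "0 < dlen y"
    using dlen_pos assms(1) by blast
  then have t: "0 < t" "t \<le> 1/2"
    unfolding t_def using self_le_power[of "2::real" "dlen y"] by (simp_all add: field_simps)
  consider "y \<in> preds" | "y \<notin> preds" "y \<le> 2/3" | "y \<notin> preds" "2/3 < y"
    by fastforce
  then show ?thesis
  proof cases
    case 1
    then show ?thesis by (simp add: binB_def)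
  next
    case 2
    then have "3 * y + t < 2"
      unfolding t_def using three_mul_add_lt_two dyadic_dlen_Ints assms(1) by blast
    moreover have "binB y = (3 * y + t) / 2"
      using 2 by (simp add: binB_def t_def)
    ultimately show ?thesis
      using t assms(2) by simp
  next
    case 3
    then have "binB y = (3 * y + t) / 4"
      by (simp add: binB_def t_def)
    with 3 t assms(3) show ?thesis
      by simp
  qed
qed

end
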